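(* Assume $n$ is even. A line $\ell$ of $\mathrm{PG}(n-1,q)$ has the property that $j(\ell)$ is a line if and only if $\ell\in\mathcal D$. Equivalently, for distinct points $Fa,Fb$, the image under $j$ of the line through $Fa$ and $Fb$ is a line if and only if $F(ab^{-1})=C$.
   Context: Let $q$ be a prime power, $F=\mathbb F_q$, $n\ge 2$ an integer, and $L=\mathbb F_{q^n}\supseteq F$. Regard $L$ as an $n$-dimensional $F$-vector space; $\mathrm{PG}(n-1,q)$ denotes the projective space whose points are the one-dimensional $F$-subspaces $Fx$, $x\in L^*$, and whose lines are the two-dimensional $F$-subspaces (identified with their sets of points). Define $j:\mathrm{PG}(n-1,q)\to\mathrm{PG}(n-1,q)$ by $j(Fx)=Fx^{-1}$. When $n$ is even, $C$ denotes the unique subfield of $L$ of order $q^2$; for $x\in L^*$, $Cx$ is a two-dimensional $F$-subspace of $L$, regarded as a line of $\mathrm{PG}(n-1,q)$, and $\mathcal D=\{Cx: x\in L^*\}$ is the Desarguesian line spread. *)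

theory Defs
  imports Main
begin

text \<open>Subfields of an ambient field 'a (L = F_{q^n} is modelled as a finite field type).\<close>
definition is_subfield :: "'a::field set \<Rightarrow> bool" where
  "is_subfield S \<longleftrightarrow> 0 \<in> S \<and> 1 \<in> S \<and>
     (\<forall>x\<in>S. \<forall>y\<in>S. x + y \<in> S \<and> x * y \<in> S) \<and>
     (\<forall>x\<in>S. - x \<in> S \<and> inverse x \<in> S)"

definition gen_subfield :: "'a::field set \<Rightarrow> 'a \<Rightarrow> 'a set" where
  "gen_subfield S x = \<Inter>{T. is_subfield T \<and> S \<subseteq> T \<and> x \<in> T}"

text \<open>The one-dimensional F-subspace Fx (a point when x \<noteq> 0); more generally K x = {c x | c in K}.\<close>
definition smul_set :: "'a::field set \<Rightarrow> 'a \<Rightarrow> 'a set" where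
  "smul_set K x = {c * x | c. c \<in> K}"

definition span2 :: "'a::field set \<Rightarrow> 'a \<Rightarrow> 'a \<Rightarrow> 'a set" where
  "span2 F a b = {c * a + d * b | c d. c \<in> F \<and> d \<in> F}"

definition pts_of :: "'a::field set \<Rightarrow> 'a set \<Rightarrow> 'a set set" where
  "pts_of F U = {smul_set F x | x. x \<in> U \<and> x \<noteq> 0}"

definition is_line :: "'a::field set \<Rightarrow> 'a set set \<Rightarrow> bool" where
  "is_line F P \<longleftrightarrow> (\<exists>a b. a \<noteq> 0 \<and> b \<noteq> 0 \<and> smul_set F a \<noteq> smul_set F b \<and>
                        P = pts_of F (span2 F a b))"

text \<open>The map j(Fx) = F x^{-1}: the image of the point Fx under elementwise inversion
  (note inverse 0 = 0 in Isabelle, so inverse ` (F x) = F (x^{-1})), extended to sets of points.\<close>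
definition jpt :: "'a::field set \<Rightarrow> 'a set" where
  "jpt p = inverse ` p"

definition jset :: "'a::field set set \<Rightarrow> 'a set set" where
  "jset P = jpt ` P"

definition desarg_spread :: "'a::field set \<Rightarrow> 'a set \<Rightarrow> 'a set set set" where
  "desarg_spread F C = {pts_of F (smul_set C x) | x. x \<noteq> 0}"

end

theory Submission
  imports Defs "HOL-Computational_Algebra.Polynomial"
begin

text \<open>Write a line as \<open>span2 F a b = F(t,1)\<cdot>b\<close> with \<open>t = a/b \<notin> F\<close>. The \<open>F\<close>-span \<open>F(t,1)\<close>
  has \<open>q\<^sup>2\<close> elements, so it equals \<open>C\<close> (the only multiplicatively closed set of that size
  containing \<open>0\<close>: the roots of \<open>x ^ q\<^sup>2 = x\<close>) exactly when it is closed under multiplication, i.e.\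
  when \<open>t\<close> satisfies a quadratic equation over \<open>F\<close>. If \<open>t \<in> C\<close> the line is the spread element
  \<open>Cb\<close>, which inversion maps onto the spread element \<open>Cb\<inverse>\<close>. Conversely, if the inverted points
  form a line, that line contains, and by counting equals, the span of \<open>a\<inverse>\<close> and \<open>b\<inverse>\<close>, and it
  contains \<open>(a + b)\<inverse>\<close>; writing \<open>(a + b)\<inverse> = \<alpha>a\<inverse> + \<beta>b\<inverse>\<close> and clearing denominators gives
  \<open>\<beta>t\<^sup>2 + (\<alpha> + \<beta> - 1)t + \<alpha> = 0\<close>.\<close>

lemma
  assumes "m \<ge> 2"
  shows finite_fixed_points_power: "finite {x::'a::field. x ^ m = x}"
    and card_fixed_points_power_le: "card {x::'a::field. x ^ m = x} \<le> m"
proof -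
  define p :: "'a poly" where "p = monom 1 m - [:0, 1:]"
  have "coeff p m = 1"
    using assms by (auto simp: p_def coeff_monom coeff_pCons split: nat.splits)
  then have "p \<noteq> 0" by auto
  have "degree p \<le> m"
    unfolding p_def using assms by (intro degree_diff_le) (auto simp: degree_monom_le)
  moreover have roots: "{x::'a. x ^ m = x} = {x. poly p x = 0}"
    by (auto simp: p_def poly_monom)
  ultimately show "card {x::'a. x ^ m = x} \<le> m"
    using card_poly_roots_bound[OF \<open>p \<noteq> 0\<close>] by simp
  show "finite {x::'a. x ^ m = x}"
    unfolding roots using poly_roots_finite[OF \<open>p \<noteq> 0\<close>] .
qed

lemma power_card_eq_self:
  fixes S :: "'a::field set"
  assumes "finite S" and mult_closed: "\<And>x y. x \<in> S \<Longrightarrow> y \<in> S \<Longrightarrow> x * y \<in> S"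
    and "0 \<in> S" and "x \<in> S"
  shows "x ^ card S = x"
proof (cases "x = 0")
  case True
  then show ?thesis
    using \<open>finite S\<close> \<open>0 \<in> S\<close> by (auto simp: card_gt_0_iff)
next
  case False
  let ?S = "S - {0}"
  have "(*) x ` ?S = ?S"
  proof (rule card_subset_eq)
    show "(*) x ` ?S \<subseteq> ?S"
      using False mult_closed \<open>x \<in> S\<close> by auto
    show "card ((*) x ` ?S) = card ?S"
      using False by (intro card_image) (auto simp: inj_on_def)
  qed (use \<open>finite S\<close> in auto)
  then have "bij_betw ((*) x) ?S ?S"
    using False by (auto simp: bij_betw_def inj_on_def)
  then have "(\<Prod>y\<in>?S. x * y) = (\<Prod>y\<in>?S. y)"
    by (rule prod.reindex_bij_betw)
  then have "x ^ card ?S = 1"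
    using \<open>finite S\<close> by (simp add: prod.distrib)
  moreover have "card S = Suc (card ?S)"
    using \<open>finite S\<close> \<open>0 \<in> S\<close> by (rule card.remove)
  ultimately show ?thesis by simp
qed

lemma mult_closed_eq_fixed_points_power_card:
  fixes S :: "'a::field set"
  assumes "finite S" and "\<And>x y. x \<in> S \<Longrightarrow> y \<in> S \<Longrightarrow> x * y \<in> S"
    and "0 \<in> S" and "card S \<ge> 2"
  shows "S = {x. x ^ card S = x}"
proof (rule card_subset_eq)
  show fin: "finite {x::'a. x ^ card S = x}"
    using finite_fixed_points_power[OF \<open>card S \<ge> 2\<close>] .
  show sub: "S \<subseteq> {x. x ^ card S = x}"
    using power_card_eq_self[OF assms(1-3)] by auto
  have "card {x::'a. x ^ card S = x} \<le> card S"
    using \<open>card S \<ge> 2\<close> by (rule card_fixed_points_power_le)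
  then show "card S = card {x::'a. x ^ card S = x}"
    using card_mono[OF fin sub] by (rule le_antisym[rotated])
qed

lemma span2_mult_right: "span2 F (t * y) y = smul_set (span2 F t 1) y"
  unfolding span2_def smul_set_def
  apply (auto simp: algebra_simps)
  subgoal for c d by (rule exI[of _ "d + c * t"]) (auto simp: algebra_simps)
  subgoal for c d by blast
  done

locale subfield =
  fixes F :: "'a::field set"
  assumes is_subfield: "is_subfield F"
begin

lemma zero_mem: "0 \<in> F" and one_mem: "1 \<in> F"
  and add_mem: "x \<in> F \<Longrightarrow> y \<in> F \<Longrightarrow> x + y \<in> F"
  and mult_mem: "x \<in> F \<Longrightarrow> y \<in> F \<Longrightarrow> x * y \<in> F"
  and uminus_mem: "x \<in> F \<Longrightarrow> - x \<in> F"
  and inverse_mem: "x \<in> F \<Longrightarrow> inverse x \<in> F"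
  using is_subfield by (auto simp: is_subfield_def)

lemma diff_mem: "x \<in> F \<Longrightarrow> y \<in> F \<Longrightarrow> x - y \<in> F"
  using add_mem uminus_mem by (metis diff_conv_add_uminus)

lemma divide_mem: "x \<in> F \<Longrightarrow> y \<in> F \<Longrightarrow> x / y \<in> F"
  using mult_mem inverse_mem by (simp add: divide_inverse)

lemma smul_set_self: "x \<in> smul_set F x"
  unfolding smul_set_def using one_mem by force

lemma smul_set_eq_iff:
  assumes "a \<noteq> 0" "b \<noteq> 0"
  shows "smul_set F a = smul_set F b \<longleftrightarrow> a * inverse b \<in> F"
proof
  assume "smul_set F a = smul_set F b"
  then obtain c where "c \<in> F" "a = c * b"
    using smul_set_self[of a] by (auto simp: smul_set_def)
  then show "a * inverse b \<in> F"
    using assms by (simp add: mult.assoc)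
next
  assume t: "a * inverse b \<in> F"
  have "c * a = (c * (a * inverse b)) * b" "c * b = (c / (a * inverse b)) * a" for c
    using assms by (simp_all add: field_simps)
  then show "smul_set F a = smul_set F b"
    unfolding smul_set_def using mult_mem[OF _ t] divide_mem[OF _ t] by blast
qed

lemma inverse_image_smul_set: "inverse ` smul_set F x = smul_set F (inverse x)"
proof
  show "inverse ` smul_set F x \<subseteq> smul_set F (inverse x)"
    unfolding smul_set_def using inverse_mem by (auto simp: inverse_mult_distrib)
  have "c * inverse x = inverse (inverse c * x)" for c
    by (simp add: inverse_mult_distrib)
  then show "smul_set F (inverse x) \<subseteq> inverse ` smul_set F x"
    unfolding smul_set_def using inverse_mem by blast
qed

lemma jset_pts_of: "jset (pts_of F U) = pts_of F (inverse ` U)"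
proof -
  have "jset (pts_of F U) = {inverse ` smul_set F x |x. x \<in> U \<and> x \<noteq> 0}"
    unfolding jset_def jpt_def pts_of_def by blast
  also have "\<dots> = {smul_set F (inverse x) |x. x \<in> U \<and> x \<noteq> 0}"
    unfolding inverse_image_smul_set ..
  also have "\<dots> = pts_of F (inverse ` U)"
    unfolding pts_of_def by force
  finally show ?thesis .
qed

lemma mem_of_pts_of_subset:
  assumes "pts_of F U \<subseteq> pts_of F W"
    and W_closed: "\<And>c y. c \<in> F \<Longrightarrow> y \<in> W \<Longrightarrow> c * y \<in> W"
    and "x \<in> U" "x \<noteq> 0"
  shows "x \<in> W"
proof -
  obtain y where "y \<in> W" "smul_set F x = smul_set F y"
    using assms unfolding pts_of_def by blast
  moreover obtain c where "c \<in> F" "x = c * y"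
    using calculation smul_set_self[of x] unfolding smul_set_def by auto
  ultimately show ?thesis
    using W_closed by simp
qed

lemma span2_add: "x \<in> span2 F u v \<Longrightarrow> y \<in> span2 F u v \<Longrightarrow> x + y \<in> span2 F u v"
  unfolding span2_def
proof clarify
  fix c d c' d' assume "c \<in> F" "d \<in> F" "c' \<in> F" "d' \<in> F"
  then show "\<exists>e f. c * u + d * v + (c' * u + d' * v) = e * u + f * v \<and> e \<in> F \<and> f \<in> F"
    using add_mem by (intro exI[of _ "c + c'"] exI[of _ "d + d'"]) (auto simp: algebra_simps)
qed

lemma span2_mult: "e \<in> F \<Longrightarrow> x \<in> span2 F u v \<Longrightarrow> e * x \<in> span2 F u v"
  unfolding span2_def
proof clarify
  fix c d assume "c \<in> F" "d \<in> F" "e \<in> F"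
  then show "\<exists>c' d'. e * (c * u + d * v) = c' * u + d' * v \<and> c' \<in> F \<and> d' \<in> F"
    using mult_mem by (intro exI[of _ "e * c"] exI[of _ "e * d"]) (auto simp: algebra_simps)
qed

lemma left_mem_span2: "u \<in> span2 F u v" and right_mem_span2: "v \<in> span2 F u v"
  unfolding span2_def using zero_mem one_mem by force+

lemma span2_subset_span2:
  assumes "x \<in> span2 F u v" "y \<in> span2 F u v"
  shows "span2 F x y \<subseteq> span2 F u v"
  using assms span2_add span2_mult by (auto simp: span2_def[of F x y])

lemma card_span2:
  assumes "b \<noteq> 0" "a * inverse b \<notin> F"
  shows "card (span2 F a b) = card F ^ 2"
proof -
  have "inj_on (\<lambda>(c, d). c * a + d * b) (F \<times> F)"
  proof (clarsimp simp: inj_on_def)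
    fix c d c' d' assume cd: "c \<in> F" "d \<in> F" "c' \<in> F" "d' \<in> F"
      and "c * a + d * b = c' * a + d' * b"
    then have eq: "(c - c') * a = (d' - d) * b"
      by (simp add: algebra_simps)
    show "c = c' \<and> d = d'"
    proof (cases "c = c'")
      case False
      then have "a * inverse b = (d' - d) / (c - c')"
        using eq assms by (simp add: field_simps)
      then show ?thesis
        using assms cd diff_mem divide_mem by metis
    qed (use eq assms in simp)
  qed
  moreover have "span2 F a b = (\<lambda>(c, d). c * a + d * b) ` (F \<times> F)"
    unfolding span2_def by auto
  ultimately show ?thesis
    by (simp add: card_image card_cartesian_product power2_eq_square)
qed

lemma quotient_notin_nonzero:
  assumes "b \<noteq> 0" "a * inverse b \<notin> F"
  shows "a \<noteq> 0" and "a + b \<noteq> 0"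
proof -
  show "a \<noteq> 0"
    using assms zero_mem by auto
  show "a + b \<noteq> 0"
  proof
    assume "a + b = 0"
    then have "a * inverse b = - 1"
      using assms(1) by (simp add: add_eq_0_iff)
    then show False
      using assms(2) uminus_mem one_mem by simp
  qed
qed

lemma pts_of_span2_is_line:
  assumes "b \<noteq> 0" "a * inverse b \<notin> F"
  shows "is_line F (pts_of F (span2 F a b))"
proof -
  have "a \<noteq> 0"
    using assms by (rule quotient_notin_nonzero)
  then have "smul_set F a \<noteq> smul_set F b"
    using assms smul_set_eq_iff by blast
  then show ?thesis
    unfolding is_line_def using \<open>a \<noteq> 0\<close> assms(1) by blast
qed

lemma span2_one_mult_closed:
  assumes "t * t \<in> span2 F t 1" "x \<in> span2 F t 1" "y \<in> span2 F t 1"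
  shows "x * y \<in> span2 F t 1"
proof -
  obtain g h where gh: "g \<in> F" "h \<in> F" "t * t = g * t + h"
    using assms(1) unfolding span2_def by auto
  obtain c d c' d' where cd: "c \<in> F" "d \<in> F" "c' \<in> F" "d' \<in> F"
    "x = c * t + d" "y = c' * t + d'"
    using assms(2,3) unfolding span2_def by auto
  have "x * y = c * c' * (t * t) + (c * d' + d * c') * t + d * d'"
    using cd by (simp add: algebra_simps)
  also have "\<dots> = (c * c' * g + (c * d' + d * c')) * t + (c * c' * h + d * d') * 1"
    using gh by (simp add: algebra_simps)
  finally have "x * y = (c * c' * g + (c * d' + d * c')) * t + (c * c' * h + d * d') * 1" .
  moreover have "c * c' * g + (c * d' + d * c') \<in> F" "c * c' * h + d * d' \<in> F"
    using cd gh by (simp_all add: add_mem mult_mem)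
  ultimately show ?thesis
    unfolding span2_def by blast
qed

end

locale finite_subfield = subfield F for F :: "'a::{field,finite} set"
begin

lemma card_ge_2: "card F \<ge> 2"
proof -
  have "card {0::'a, 1} \<le> card F"
    using zero_mem one_mem by (intro card_mono) auto
  then show ?thesis by simp
qed

lemma eq_fixed_points_power_card: "F = {x. x ^ card F = x}"
  using mult_closed_eq_fixed_points_power_card[OF finite mult_mem zero_mem card_ge_2] .

end

locale quadratic_subfield = F: finite_subfield F + C: finite_subfield C
  for F C :: "'a::{field,finite} set" +
  assumes card_C: "card C = card F ^ 2"
begin

lemma F_subset_C: "F \<subseteq> C"
proof
  fix x assume "x \<in> F"
  then have "x ^ card F = x"
    using F.eq_fixed_points_power_card by blast
  then have "x ^ card C = x"
    by (simp add: card_C power2_eq_square power_mult)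
  then show "x \<in> C"
    using C.eq_fixed_points_power_card by blast
qed

lemma mult_mem_smul_set_C:
  assumes "c \<in> F" "y \<in> smul_set C x"
  shows "c * y \<in> smul_set C x"
proof -
  obtain e where "e \<in> C" "y = e * x"
    using assms(2) unfolding smul_set_def by blast
  moreover have "c * e \<in> C"
    using assms(1) F_subset_C C.mult_mem calculation(1) by blast
  ultimately show ?thesis
    unfolding smul_set_def by (auto simp: mult.assoc)
qed

lemma span2_one_eq_C:
  assumes "t \<in> C" "t \<notin> F"
  shows "span2 F t 1 = C"
proof (rule card_subset_eq)
  show "span2 F t 1 \<subseteq> C"
  proof (clarsimp simp: span2_def)
    fix c d assume "c \<in> F" "d \<in> F"
    then show "c * t + d \<in> C"
      using assms(1) F_subset_C by (intro C.add_mem C.mult_mem) auto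
  qed
  show "card (span2 F t 1) = card C"
    using F.card_span2[of 1 t] assms card_C by simp
qed simp

lemma span2_eq_smul_set_C:
  assumes "b \<noteq> 0" "a * inverse b \<in> C" "a * inverse b \<notin> F"
  shows "span2 F a b = smul_set C b"
proof -
  have ab: "a * inverse b * b = a"
    using assms(1) by (simp add: mult.assoc)
  show ?thesis
    using span2_mult_right[of F "a * inverse b" b] span2_one_eq_C[OF assms(2,3)]
    unfolding ab by simp
qed

lemma mem_C_if_square_mem_span2:
  assumes "t \<notin> F" "t * t \<in> span2 F t 1"
  shows "t \<in> C"
proof -
  have "t \<noteq> 0"
    using assms(1) F.zero_mem by auto
  then have card_span: "card (span2 F t 1) = card C"
    using F.card_span2[of 1 t] assms card_C by simp
  have "span2 F t 1 = {x. x ^ card C = x}"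
    using mult_closed_eq_fixed_points_power_card[of "span2 F t 1"]
      F.span2_one_mult_closed[OF assms(2)] F.span2_mult[OF F.zero_mem F.left_mem_span2]
      C.card_ge_2 card_span by simp
  then show ?thesis
    using C.eq_fixed_points_power_card F.left_mem_span2[of t 1] by simp
qed

lemma mem_C_if_quadratic:
  assumes "t \<notin> F" "c2 \<in> F" "c1 \<in> F" "c0 \<in> F"
    and "c2 * t * t + c1 * t + c0 = 0" and "c2 \<noteq> 0 \<or> c1 \<noteq> 0 \<or> c0 \<noteq> 0"
  shows "t \<in> C"
proof (cases "c2 = 0")
  case True
  then have "c1 \<noteq> 0" and "c1 * t = - c0"
    using assms(5,6) by (auto simp: eq_neg_iff_add_eq_0 add.commute)
  then have "t = - c0 / c1"
    by (simp add: field_simps)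
  then show ?thesis
    using assms F.divide_mem F.uminus_mem by metis
next
  case False
  then have "t * t = (- c1 / c2) * t + (- c0 / c2) * 1"
    using assms(5) by (simp add: field_simps) (simp add: eq_neg_iff_add_eq_0 algebra_simps)
  then have "t * t \<in> span2 F t 1"
    unfolding span2_def using assms F.divide_mem F.uminus_mem by blast
  then show ?thesis
    using mem_C_if_square_mem_span2 assms(1) by blast
qed

lemma gen_subfield_eq_C_iff:
  assumes "t \<notin> F"
  shows "gen_subfield F t = C \<longleftrightarrow> t \<in> C"
proof
  assume "gen_subfield F t = C"
  then show "t \<in> C"
    unfolding gen_subfield_def by blast
next
  assume "t \<in> C"
  have "C \<subseteq> T" if "is_subfield T" "F \<subseteq> T" "t \<in> T" for T
  proof -
    interpret T: subfield T by unfold_locales (fact that(1))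
    have "span2 F t 1 \<subseteq> T"
    proof (clarsimp simp: span2_def)
      fix c d assume "c \<in> F" "d \<in> F"
      then show "c * t + d \<in> T"
        using that by (intro T.add_mem T.mult_mem) auto
    qed
    then show ?thesis
      using span2_one_eq_C[OF \<open>t \<in> C\<close> assms] by simp
  qed
  then show "gen_subfield F t = C"
    unfolding gen_subfield_def using C.is_subfield F_subset_C \<open>t \<in> C\<close> by blast
qed

lemma pts_of_span2_mem_desarg_spread_iff:
  assumes "b \<noteq> 0" "a * inverse b \<notin> F"
  shows "pts_of F (span2 F a b) \<in> desarg_spread F C \<longleftrightarrow> a * inverse b \<in> C"
proof
  assume "a * inverse b \<in> C"
  then have "span2 F a b = smul_set C b"
    using span2_eq_smul_set_C assms by blast
  then show "pts_of F (span2 F a b) \<in> desarg_spread F C"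
    unfolding desarg_spread_def using assms(1) by (intro CollectI exI[of _ b]) simp
next
  assume "pts_of F (span2 F a b) \<in> desarg_spread F C"
  then obtain x where x: "x \<noteq> 0" "pts_of F (span2 F a b) = pts_of F (smul_set C x)"
    unfolding desarg_spread_def by blast
  have "a \<in> smul_set C x" "b \<in> smul_set C x"
    using F.mem_of_pts_of_subset[OF equalityD1[OF x(2)] mult_mem_smul_set_C]
      F.left_mem_span2 F.right_mem_span2 F.quotient_notin_nonzero(1)[OF assms] assms(1)
    by blast+
  then obtain e1 e2 where e: "e1 \<in> C" "e2 \<in> C" "a = e1 * x" "b = e2 * x"
    unfolding smul_set_def by blast
  then have "a * inverse b = (e1 * inverse e2) * (x * inverse x)"
    by (simp add: inverse_mult_distrib mult_ac)
  then show "a * inverse b \<in> C"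
    using x(1) e(1,2) C.mult_mem C.inverse_mem by simp
qed

lemma jset_is_line_if_mem_C:
  assumes "b \<noteq> 0" "a * inverse b \<in> C" "a * inverse b \<notin> F"
  shows "is_line F (jset (pts_of F (span2 F a b)))"
proof -
  let ?t = "a * inverse b"
  have "inverse ` span2 F a b = smul_set C (inverse b)"
    using span2_eq_smul_set_C[OF assms] C.inverse_image_smul_set by simp
  also have "\<dots> = span2 F (?t * inverse b) (inverse b)"
    using span2_mult_right[of F ?t "inverse b"] span2_one_eq_C[OF assms(2,3)] by simp
  finally show ?thesis
    using F.jset_pts_of F.pts_of_span2_is_line[of "inverse b" "?t * inverse b"] assms
    by (simp add: mult.assoc)
qed

lemma inverse_sum_mem_span2_if_jset_is_line:
  assumes "b \<noteq> 0" "a * inverse b \<notin> F" and "is_line F (jset (pts_of F (span2 F a b)))"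
  shows "inverse (a + b) \<in> span2 F (inverse a) (inverse b)"
proof -
  obtain u v where "u \<noteq> 0" "v \<noteq> 0" "smul_set F u \<noteq> smul_set F v"
    and J: "pts_of F (inverse ` span2 F a b) = pts_of F (span2 F u v)"
    using assms(3) unfolding is_line_def F.jset_pts_of by blast
  then have "u * inverse v \<notin> F"
    using F.smul_set_eq_iff by blast
  let ?W = "span2 F u v"
  have inverse_mem_W: "inverse x \<in> ?W" if "x \<in> span2 F a b" "x \<noteq> 0" for x
    using F.mem_of_pts_of_subset[OF equalityD1[OF J] F.span2_mult] that by simp
  have "a \<noteq> 0" "a + b \<noteq> 0"
    using F.quotient_notin_nonzero[OF assms(1,2)] by auto
  have "inverse a * inverse (inverse b) \<notin> F"
    using assms(2) F.inverse_mem[of "inverse a * inverse (inverse b)"]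
    by (auto simp: inverse_mult_distrib mult.commute)
  then have "card (span2 F (inverse a) (inverse b)) = card ?W"
    using F.card_span2 assms \<open>v \<noteq> 0\<close> \<open>u * inverse v \<notin> F\<close> by simp
  moreover have "span2 F (inverse a) (inverse b) \<subseteq> ?W"
    using F.span2_subset_span2 inverse_mem_W F.left_mem_span2 F.right_mem_span2
      \<open>a \<noteq> 0\<close> assms(1) by blast
  ultimately have "span2 F (inverse a) (inverse b) = ?W"
    using card_subset_eq[OF finite] by blast
  then show ?thesis
    using inverse_mem_W[OF F.span2_add[OF F.left_mem_span2 F.right_mem_span2]] \<open>a + b \<noteq> 0\<close>
    by simp
qed

lemma mem_C_if_inverse_sum_mem_span2:
  assumes "b \<noteq> 0" "a * inverse b \<notin> F"
    and "inverse (a + b) \<in> span2 F (inverse a) (inverse b)"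
  shows "a * inverse b \<in> C"
proof -
  obtain \<alpha> \<beta> where "\<alpha> \<in> F" "\<beta> \<in> F" and sum: "inverse (a + b) = \<alpha> * inverse a + \<beta> * inverse b"
    using assms(3) unfolding span2_def by blast
  have "a \<noteq> 0" "a + b \<noteq> 0"
    using F.quotient_notin_nonzero[OF assms(1,2)] by auto
  then have "\<beta> * (a * inverse b) * (a * inverse b) + (\<alpha> + \<beta> - 1) * (a * inverse b) + \<alpha> = 0"
    using sum assms(1) by (simp add: field_simps)
  moreover have "\<alpha> + \<beta> - 1 \<in> F"
    using \<open>\<alpha> \<in> F\<close> \<open>\<beta> \<in> F\<close> by (intro F.diff_mem F.add_mem F.one_mem)
  moreover have "\<beta> \<noteq> 0 \<or> \<alpha> + \<beta> - 1 \<noteq> 0 \<or> \<alpha> \<noteq> 0"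
    by auto
  ultimately show ?thesis
    using mem_C_if_quadratic[OF assms(2) \<open>\<beta> \<in> F\<close> _ \<open>\<alpha> \<in> F\<close>] by blast
qed

lemma jset_is_line_iff:
  assumes "b \<noteq> 0" "a * inverse b \<notin> F"
  shows "is_line F (jset (pts_of F (span2 F a b))) \<longleftrightarrow> a * inverse b \<in> C"
  using jset_is_line_if_mem_C inverse_sum_mem_span2_if_jset_is_line
    mem_C_if_inverse_sum_mem_span2 assms by blast

end

theorem mainTheorem5:
  fixes F C :: "'a::{field,finite} set" and q n :: nat
  assumes F_sub: "is_subfield F"
    and q_def: "q = card F"
    and L_card: "card (UNIV :: 'a set) = q ^ n"
    and n_ge: "n \<ge> 2"
    and n_even: "even n"
    and C_sub: "is_subfield C"
    and C_card: "card C = q ^ 2"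
  shows "(\<forall>l. is_line F l \<longrightarrow> (is_line F (jset l) \<longleftrightarrow> l \<in> desarg_spread F C)) \<and>
         (\<forall>a b. a \<noteq> 0 \<and> b \<noteq> 0 \<and> smul_set F a \<noteq> smul_set F b \<longrightarrow>
            (is_line F (jset (pts_of F (span2 F a b))) \<longleftrightarrow> gen_subfield F (a * inverse b) = C))"
proof -
  \<comment> \<open>The hypotheses on \<open>n\<close> only guarantee that a subfield \<open>C\<close> of order \<open>q\<^sup>2\<close> exists.\<close>
  interpret quadratic_subfield F C
    by unfold_locales (use F_sub C_sub C_card q_def in auto)
  have quotient_notin_F: "a * inverse b \<notin> F"
    if "a \<noteq> 0" "b \<noteq> 0" "smul_set F a \<noteq> smul_set F b" for a b
    using F.smul_set_eq_iff that by blast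
  show ?thesis
  proof (intro conjI allI impI)
    fix l assume "is_line F l"
    then obtain a b where ab: "a \<noteq> 0" "b \<noteq> 0" "smul_set F a \<noteq> smul_set F b"
      and "l = pts_of F (span2 F a b)"
      unfolding is_line_def by blast
    then show "is_line F (jset l) \<longleftrightarrow> l \<in> desarg_spread F C"
      using jset_is_line_iff[OF ab(2) quotient_notin_F[OF ab]]
        pts_of_span2_mem_desarg_spread_iff[OF ab(2) quotient_notin_F[OF ab]] by simp
  next
    fix a b assume "a \<noteq> 0 \<and> b \<noteq> 0 \<and> smul_set F a \<noteq> smul_set F b"
    then have ab: "b \<noteq> 0" "a * inverse b \<notin> F"
      using quotient_notin_F by auto
    show "is_line F (jset (pts_of F (span2 F a b))) \<longleftrightarrow> gen_subfield F (a * inverse b) = C"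
      using jset_is_line_iff[OF ab] gen_subfield_eq_C_iff[OF ab(2)] by simp
  qed
qed

end
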